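(* Let $m\ge1$, $\tau\ge0$, $C=C([-\tau,0],\mathbb{R}^m)$ with the maximum norm and positive cone $C_+=C([-\tau,0],\mathbb{R}^m_+)$. Let $F,V$ be bounded linear operators from $C$ to $\mathbb{R}^m$ such that (A1) $F(C_+)\subset\mathbb{R}^m_+$; and (A2) $-V=(-V_1,\dots,-V_m)$ satisfies the quasimonotone condition: for each $i$, $-V_i(\phi)\ge0$ whenever $\phi\in C_+$ and $\phi_i(0)=0$; and $s(-V)<0$. Let $\mathcal{R}_0=r(\hat{F}\hat{V}^{-1})$ and $\lambda^*=s(F-V)$. Then $\mathcal{R}_0-1$ and $\lambda^*$ have the same sign.
   Context: For $x\in\mathbb{R}^m$, $\hat{x}\in C$ is the constant function equal to $x$; for a bounded linear $L:C\to\mathbb{R}^m$, $\hat{L}$ is the $m\times m$ matrix $\hat{L}x=L(\hat{x})$. $r(\cdot)$ denotes spectral radius. For bounded linear $L:C\to\mathbb{R}^m$, $s(L)$ is the stability modulus of the FDE $\frac{du(t)}{dt}=L(u_t)$ (with $u_t(\theta)=u(t+\theta)$), i.e. the maximum of real parts of its eigenvalues (those $\lambda\in\mathbb{C}$ for which it has a nonzero solution $e^{\lambda t}v$); thus $s(-V)$ refers to $\frac{du}{dt}=-V(u_t)$ and $s(F-V)$ to $\frac{du}{dt}=F(u_t)-V(u_t)$. "Same sign" means equal values of the sign function. *)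

theory Defs
  imports "HOL-Analysis.Analysis"
begin

text \<open>The phase space C = C([-tau,0], R^m) is represented by functions
  real => real^'m that are continuous on {-tau..0}; operators C -> R^m are
  functions (real => real^'m) => real^'m, constrained only on that set.\<close>

definition in_C :: "real \<Rightarrow> (real \<Rightarrow> real^'m) \<Rightarrow> bool" where
  "in_C \<tau> \<phi> \<longleftrightarrow> continuous_on {-\<tau>..0} \<phi>"

definition in_Cplus :: "real \<Rightarrow> (real \<Rightarrow> real^'m) \<Rightarrow> bool" where
  "in_Cplus \<tau> \<phi> \<longleftrightarrow> in_C \<tau> \<phi> \<and> (\<forall>\<theta>\<in>{-\<tau>..0}. \<forall>i. 0 \<le> \<phi> \<theta> $ i)"

definition bounded_linear_C :: "real \<Rightarrow> ((real \<Rightarrow> real^'m) \<Rightarrow> real^'m) \<Rightarrow> bool" where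
  "bounded_linear_C \<tau> L \<longleftrightarrow>
     (\<forall>\<phi> \<psi>. in_C \<tau> \<phi> \<longrightarrow> in_C \<tau> \<psi> \<longrightarrow> L (\<lambda>\<theta>. \<phi> \<theta> + \<psi> \<theta>) = L \<phi> + L \<psi>) \<and>
     (\<forall>c \<phi>. in_C \<tau> \<phi> \<longrightarrow> L (\<lambda>\<theta>. c *\<^sub>R \<phi> \<theta>) = c *\<^sub>R L \<phi>) \<and>
     (\<exists>K. \<forall>\<phi>. in_C \<tau> \<phi> \<longrightarrow> norm (L \<phi>) \<le> K * (SUP \<theta>\<in>{-\<tau>..0}. norm (\<phi> \<theta>)))"

definition cplx_app :: "((real \<Rightarrow> real^'m) \<Rightarrow> real^'m) \<Rightarrow> (real \<Rightarrow> complex^'m) \<Rightarrow> complex^'m" where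
  "cplx_app L \<phi> = (\<chi> i. Complex (L (\<lambda>\<theta>. \<chi> j. Re (\<phi> \<theta> $ j)) $ i) (L (\<lambda>\<theta>. \<chi> j. Im (\<phi> \<theta> $ j)) $ i))"

text \<open>lambda is an eigenvalue of du/dt = L(u_t): there is a nonzero solution
  u(t) = e^{lambda t} v, where u_t(theta) = u(t+theta).\<close>
definition fde_eigenvalue :: "((real \<Rightarrow> real^'m) \<Rightarrow> real^'m) \<Rightarrow> complex \<Rightarrow> bool" where
  "fde_eigenvalue L z \<longleftrightarrow> (\<exists>v::complex^'m. v \<noteq> 0 \<and>
     (\<forall>t::real. ((\<lambda>s. exp (z * of_real s) *s v) has_vector_derivative
         cplx_app L (\<lambda>\<theta>. exp (z * of_real (t + \<theta>)) *s v)) (at t)))"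

definition stab_mod :: "((real \<Rightarrow> real^'m) \<Rightarrow> real^'m) \<Rightarrow> real" where
  "stab_mod L = Sup (Re ` {z. fde_eigenvalue L z})"

definition hatmat :: "((real \<Rightarrow> real^'m) \<Rightarrow> real^'m) \<Rightarrow> real^'m^'m" where
  "hatmat L = matrix (\<lambda>x. L (\<lambda>\<theta>. x))"

definition spec_radius :: "real^'n^'n \<Rightarrow> real" where
  "spec_radius A = Sup {cmod \<mu> | \<mu>. \<exists>v::complex^'n. v \<noteq> 0 \<and>
      (\<chi> i j. complex_of_real (A $ i $ j)) *v v = \<mu> *s v}"

end

(* Both sides of the sign identity are greatest elements of Collatz-Wielandt sets
   {mu. mu u <= M(mu) u for some probability vector u} of families M of Metzler
   matrices. For a continuous antitone family such a greatest element l exists by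
   compactness, and Brouwer's fixed point theorem makes it an eigenvalue of M(l) with a
   nonnegative eigenvector. For the constant family F^ V^-1 the greatest element is the
   spectral radius R0. For the characteristic matrices M(mu) = L(e^(mu .) I) of
   L = F - V it is s(F - V): by quasimonotonicity the modulus of an eigenfunction is a
   subsolution, so the real part of every eigenvalue lies in the set, while the greatest
   element is itself a real eigenvalue. Finally M(0) = F^ - V^, where F^ >= 0 and V^ is a
   nonsingular M-matrix because s(-V) < 0. For such B and W, 0 lies in the set of B - W
   iff 1 lies in the set of B W^-1, and some point above 0 lies in the first iff some
   point above 1 lies in the second (via the perturbation W + mu I for small mu > 0). *)

theory Submission
  imports Defs
begin

section \<open>Probability vectors and Metzler matrices\<close>

definition prob_simplex :: "(real^'n) set" where
  "prob_simplex = {u. 0 \<le> u \<and> (\<Sum>i\<in>UNIV. u$i) = 1}"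

lemma prob_simplex_nonneg: "u \<in> prob_simplex \<Longrightarrow> 0 \<le> u"
  by (simp add: prob_simplex_def)

lemma prob_simplex_nonzero: "u \<in> prob_simplex \<Longrightarrow> u \<noteq> 0"
  by (auto simp: prob_simplex_def)

lemma axis_in_prob_simplex: "axis k 1 \<in> prob_simplex"
  by (simp add: prob_simplex_def less_eq_vec_def axis_def)

lemma vec_max_component: "\<exists>k. \<forall>j. (u::real^'n)$j \<le> u$k"
proof -
  have "Max (range (($) u)) \<in> range (($) u)" by (intro Max_in) auto
  then obtain k where "Max (range (($) u)) = u$k" by blast
  moreover have "u$j \<le> Max (range (($) u))" for j by (intro Max_ge) auto
  ultimately show ?thesis by metis
qed

lemma sum_components_pos:
  assumes "0 \<le> x" "x \<noteq> (0::real^'n)"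
  shows "0 < (\<Sum>i\<in>UNIV. x$i)"
proof -
  obtain k where "x$k \<noteq> 0" using assms(2) by (auto simp: vec_eq_iff)
  with assms(1) have "0 < x$k" by (simp add: less_eq_vec_def order_less_le)
  moreover have "x$k \<le> (\<Sum>i\<in>UNIV. x$i)"
    using assms(1) by (intro member_le_sum) (auto simp: less_eq_vec_def)
  ultimately show ?thesis by linarith
qed

lemma prob_simplex_max_component_pos:
  fixes u :: "real^'n"
  assumes "u \<in> prob_simplex" "\<forall>j. u$j \<le> u$k"
  shows "0 < u$k"
proof -
  have "0 < (\<Sum>j\<in>UNIV. u$j)" using assms(1) by (simp add: prob_simplex_def)
  also have "\<dots> \<le> (\<Sum>j\<in>(UNIV::'n set). u$k)" using assms(2) by (intro sum_mono) auto
  finally show ?thesis by (simp add: zero_less_mult_iff)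
qed

lemma normalize_in_prob_simplex:
  assumes "0 \<le> x" "x \<noteq> (0::real^'n)"
  shows "(1 / (\<Sum>i\<in>UNIV. x$i)) *\<^sub>R x \<in> prob_simplex"
  using sum_components_pos[OF assms] assms(1)
  by (simp add: prob_simplex_def less_eq_vec_def sum_divide_distrib[symmetric])

lemma compact_prob_simplex: "compact (prob_simplex :: (real^'n) set)"
proof -
  have "prob_simplex = (\<Inter>i. {u::real^'n. 0 \<le> u$i}) \<inter> {u. (\<Sum>i\<in>UNIV. u$i) = 1}"
    by (auto simp: prob_simplex_def less_eq_vec_def)
  moreover have "closed {u::real^'n. (\<Sum>i\<in>UNIV. u$i) = 1}"
    by (intro closed_Collect_eq continuous_intros)
  ultimately have "closed (prob_simplex :: (real^'n) set)"
    by (metis closed_INT closed_Int closed_halfspace_component_ge_cart)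
  moreover have "norm u \<le> 1" if "u \<in> prob_simplex" for u :: "real^'n"
  proof -
    have "norm u \<le> (\<Sum>i\<in>UNIV. \<bar>u$i\<bar>)" by (rule norm_le_l1_cart)
    also have "\<dots> = 1" using that by (simp add: prob_simplex_def less_eq_vec_def)
    finally show ?thesis .
  qed
  then have "bounded (prob_simplex :: (real^'n) set)" unfolding bounded_iff by blast
  ultimately show ?thesis by (simp add: compact_eq_bounded_closed)
qed

lemma matrix_vector_mult_mono:
  fixes A B :: "real^'n^'m"
  assumes "A \<le> B" "0 \<le> u"
  shows "A *v u \<le> B *v u"
  using assms unfolding less_eq_vec_def matrix_vector_mult_def
  by (auto intro!: sum_mono mult_right_mono)

lemma nonneg_matrix_vector_mult_mono:
  fixes B :: "real^'n^'m"
  assumes "0 \<le> B" "x \<le> y"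
  shows "B *v x \<le> B *v y"
  using assms unfolding less_eq_vec_def matrix_vector_mult_def
  by (auto intro!: sum_mono mult_left_mono)

lemma nonneg_matrix_vector_mult_nonneg:
  fixes B :: "real^'n^'m"
  shows "0 \<le> B \<Longrightarrow> 0 \<le> x \<Longrightarrow> 0 \<le> B *v x"
  using nonneg_matrix_vector_mult_mono[of B 0 x] by simp

lemma nonneg_matrix_mult_nonneg:
  fixes A :: "real^'n^'m" and B :: "real^'k^'n"
  shows "0 \<le> A \<Longrightarrow> 0 \<le> B \<Longrightarrow> 0 \<le> A ** B"
  unfolding less_eq_vec_def matrix_matrix_mult_def by (auto intro!: sum_nonneg)

lemma abs_matrix_entry_le_norm: "\<bar>A $ i $ j\<bar> \<le> norm (A :: real^'n^'m)"
  using Finite_Cartesian_Product.norm_nth_le[of "A $ i" j] Finite_Cartesian_Product.norm_nth_le[of A i]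
  by simp

definition metzler :: "real^'n^'n \<Rightarrow> bool" where
  "metzler A \<longleftrightarrow> (\<forall>i j. i \<noteq> j \<longrightarrow> 0 \<le> A$i$j)"

lemma nonneg_imp_metzler: "0 \<le> A \<Longrightarrow> metzler A"
  by (simp add: metzler_def less_eq_vec_def)

lemma metzler_mult_component_nonneg:
  assumes "metzler A" "0 \<le> u" "u$k = 0"
  shows "0 \<le> (A *v u)$k"
proof -
  have "0 \<le> A$k$j * u$j" for j
    using assms by (cases "j = k") (auto simp: metzler_def less_eq_vec_def)
  then show ?thesis by (simp add: matrix_vector_mult_def sum_nonneg)
qed

lemma metzler_shift_nonneg:
  assumes "metzler (A::real^'n^'n)"
  shows "\<exists>c\<ge>d. 0 \<le> A + c *\<^sub>R mat 1"
proof (intro exI conjI)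
  let ?c = "\<bar>d\<bar> + (\<Sum>i\<in>UNIV. \<bar>A$i$i\<bar>)"
  show "d \<le> ?c" by (simp add: sum_nonneg add_increasing2)
  have "\<bar>A$i$i\<bar> \<le> (\<Sum>i\<in>UNIV. \<bar>A$i$i\<bar>)" for i by (rule member_le_sum) auto
  then have "0 \<le> A$i$i + ?c" for i by (smt (verit))
  then show "0 \<le> A + ?c *\<^sub>R mat 1"
    using assms by (auto simp: less_eq_vec_def metzler_def mat_def)
qed

lemma nonneg_matrix_eigenvector_ge:
  fixes P :: "real^'n^'n"
  assumes P: "0 \<le> P" and u: "u \<in> prob_simplex" "l *\<^sub>R u \<le> P *v u" and l: "0 < l"
  shows "\<exists>w\<in>prob_simplex. \<exists>\<rho>\<ge>l. P *v w = \<rho> *\<^sub>R w"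
proof -
  define K where "K = {v \<in> prob_simplex. l *\<^sub>R v \<le> P *v v}"
  define \<sigma> where "\<sigma> v = (\<Sum>i\<in>UNIV. (P *v v)$i)" for v
  define T where "T v = (1 / \<sigma> v) *\<^sub>R (P *v v)" for v
  have \<sigma>_ge: "l \<le> \<sigma> u" if "u \<in> K" for u
  proof -
    have "l = (\<Sum>i\<in>UNIV. (l *\<^sub>R u)$i)"
      using that by (simp add: K_def prob_simplex_def sum_distrib_left[symmetric])
    also have "\<dots> \<le> \<sigma> u"
      using that unfolding \<sigma>_def K_def by (intro sum_mono) (simp add: less_eq_vec_def)
    finally show ?thesis .
  qed
  have "T u \<in> K" if "u \<in> K" for u
  proof -
    have "0 \<le> P *v u" using that P by (simp add: K_def prob_simplex_def nonneg_matrix_vector_mult_nonneg)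
    moreover have "P *v u \<noteq> 0" using \<sigma>_ge[OF that] l by (auto simp: \<sigma>_def)
    ultimately have "T u \<in> prob_simplex"
      unfolding T_def \<sigma>_def by (rule normalize_in_prob_simplex)
    moreover have "l *\<^sub>R (P *v u) \<le> P *v (P *v u)"
      using nonneg_matrix_vector_mult_mono[OF P, of "l *\<^sub>R u" "P *v u"] that
      by (simp add: K_def matrix_vector_mult_scaleR)
    then have "l *\<^sub>R T u \<le> P *v T u"
      using \<sigma>_ge[OF that] l
      by (simp add: T_def matrix_vector_mult_scaleR less_eq_vec_def divide_right_mono)
    ultimately show ?thesis by (simp add: K_def)
  qed
  moreover have "compact K"
  proof -
    have "K = prob_simplex \<inter> (\<Inter>i. {u. l * u$i \<le> (\<Sum>j\<in>UNIV. P$i$j * u$j)})"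
      by (auto simp: K_def less_eq_vec_def matrix_vector_mult_def)
    moreover have "closed {u::real^'n. l * u$i \<le> (\<Sum>j\<in>UNIV. P$i$j * u$j)}" for i
      by (intro closed_Collect_le continuous_intros)
    ultimately show ?thesis
      by (simp add: compact_Int_closed compact_prob_simplex closed_INT)
  qed
  moreover have "convex K"
  proof (rule convexI)
    fix x y :: "real^'n" and a b :: real
    assume xy: "x \<in> K" "y \<in> K" and ab: "0 \<le> a" "0 \<le> b" "a + b = 1"
    have "a * (l * x$i) + b * (l * y$i) \<le> a * (P *v x)$i + b * (P *v y)$i" for i
      using xy ab by (intro add_mono mult_left_mono) (auto simp: K_def less_eq_vec_def)
    then show "a *\<^sub>R x + b *\<^sub>R y \<in> K"
      using xy ab
      by (auto simp: K_def prob_simplex_def less_eq_vec_def sum.distrib sum_distrib_left[symmetric]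
          matrix_vector_right_distrib matrix_vector_mult_scaleR algebra_simps)
  qed
  moreover have "K \<noteq> {}" using u by (auto simp: K_def)
  moreover have "continuous_on K T"
  proof -
    have "\<forall>u\<in>K. \<sigma> u \<noteq> 0" using \<sigma>_ge l by force
    then show ?thesis
      unfolding T_def \<sigma>_def matrix_vector_mult_def by (intro continuous_intros) auto
  qed
  ultimately obtain w where w: "w \<in> K" "T w = w"
    using brouwer[of K T] by blast
  have "P *v w = \<sigma> w *\<^sub>R T w" using \<sigma>_ge[OF w(1)] l by (simp add: T_def)
  then show ?thesis using w \<sigma>_ge[OF w(1)] by (auto simp: K_def)
qed

lemma metzler_eigenvector_ge:
  fixes A :: "real^'n^'n"
  assumes "metzler A" "u \<in> prob_simplex" "l *\<^sub>R u \<le> A *v u"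
  shows "\<exists>w\<in>prob_simplex. \<exists>\<rho>\<ge>l. A *v w = \<rho> *\<^sub>R w"
proof -
  obtain c where c: "1 - l \<le> c" "0 \<le> A + c *\<^sub>R mat 1"
    using metzler_shift_nonneg[OF assms(1)] by blast
  have "(l + c) *\<^sub>R u \<le> (A + c *\<^sub>R mat 1) *v u"
    using assms(3) by (simp add: matrix_vector_mult_add_rdistrib scaleR_matrix_vector_assoc[symmetric]
        scaleR_add_left add_right_mono)
  then obtain w \<rho> where "w \<in> prob_simplex" "l + c \<le> \<rho>" "(A + c *\<^sub>R mat 1) *v w = \<rho> *\<^sub>R w"
    using nonneg_matrix_eigenvector_ge[OF c(2) assms(2)] c(1) by fastforce
  then show ?thesis
    by (intro bexI[of _ w] exI[of _ "\<rho> - c"])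
       (auto simp: matrix_vector_mult_add_rdistrib scaleR_matrix_vector_assoc[symmetric] algebra_simps)
qed

section \<open>Collatz--Wielandt sets\<close>

text \<open>For a constant family this is the classical Collatz--Wielandt set of a nonnegative matrix,
  whose supremum is the Perron root; for the characteristic matrices of a delay equation its
  supremum is the stability modulus.\<close>
definition cw_set :: "(real \<Rightarrow> real^'n^'n) \<Rightarrow> real set" where
  "cw_set M = {\<mu>. \<exists>u\<in>prob_simplex. \<mu> *\<^sub>R u \<le> M \<mu> *v u}"

lemma cw_setI:
  assumes "0 \<le> x" "x \<noteq> 0" "\<mu> *\<^sub>R x \<le> M \<mu> *v x"
  shows "\<mu> \<in> cw_set M"
proof -
  define s where "s = (\<Sum>i\<in>UNIV. x$i)"
  have "0 < s" unfolding s_def using assms(1,2) by (rule sum_components_pos)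
  then have "\<mu> *\<^sub>R ((1 / s) *\<^sub>R x) \<le> M \<mu> *v ((1 / s) *\<^sub>R x)"
    using assms(3) by (simp add: matrix_vector_mult_scaleR less_eq_vec_def divide_right_mono)
  moreover have "(1 / s) *\<^sub>R x \<in> prob_simplex"
    unfolding s_def using assms(1,2) by (rule normalize_in_prob_simplex)
  ultimately show ?thesis unfolding cw_set_def by blast
qed

lemma mem_cw_set_iff_const: "\<mu> \<in> cw_set M \<longleftrightarrow> \<mu> \<in> cw_set (\<lambda>_. M \<mu>)"
  by (simp add: cw_set_def)

lemma cw_set_const_mono:
  assumes "A \<le> A'" "\<mu> \<in> cw_set (\<lambda>_. A)"
  shows "\<mu> \<in> cw_set (\<lambda>_. A')"
  using assms order_trans[OF _ matrix_vector_mult_mono[OF assms(1)]]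
  by (fastforce simp: cw_set_def prob_simplex_def)

lemma cw_set_downward_closed:
  assumes "antimono M" "\<mu> \<in> cw_set M" "\<mu>' \<le> \<mu>"
  shows "\<mu>' \<in> cw_set M"
proof -
  obtain u where u: "u \<in> prob_simplex" "\<mu> *\<^sub>R u \<le> M \<mu> *v u"
    using assms(2) by (auto simp: cw_set_def)
  have "\<mu>' *\<^sub>R u \<le> \<mu> *\<^sub>R u"
    using u(1) assms(3) by (auto simp: prob_simplex_def less_eq_vec_def intro: mult_right_mono)
  also have "\<dots> \<le> M \<mu> *v u" by (fact u(2))
  also have "\<dots> \<le> M \<mu>' *v u"
    using antimonoD[OF assms(1,3)] u(1) by (intro matrix_vector_mult_mono) (simp_all add: prob_simplex_def)
  finally show ?thesis using u(1) by (auto simp: cw_set_def)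
qed

lemma cw_set_nonempty:
  fixes M :: "real \<Rightarrow> real^'n^'n"
  assumes "antimono M" "\<And>\<mu>. metzler (M \<mu>)"
  shows "cw_set M \<noteq> {}"
proof -
  obtain k :: 'n where True by blast
  define \<mu> where "\<mu> = min 0 (M 0 $ k $ k)"
  have "M 0 \<le> M \<mu>" using antimonoD[OF assms(1)] by (simp add: \<mu>_def)
  then have "\<mu> \<le> M \<mu> $ k $ k" by (simp add: \<mu>_def less_eq_vec_def min.coboundedI2)
  moreover have "0 \<le> M \<mu> $ i $ k" if "i \<noteq> k" for i
    using assms(2) that by (simp add: metzler_def)
  ultimately have "\<mu> *\<^sub>R axis k 1 \<le> M \<mu> *v axis k 1"
    unfolding less_eq_vec_def matrix_vector_mult_basis column_def by (auto simp: axis_def)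
  then show ?thesis using axis_in_prob_simplex[of k] by (auto simp: cw_set_def)
qed

lemma cw_set_bdd_above:
  fixes M :: "real \<Rightarrow> real^'n^'n"
  assumes "\<And>\<mu> i j. 0 < \<mu> \<Longrightarrow> \<bar>M \<mu> $ i $ j\<bar> \<le> K"
  shows "bdd_above (cw_set M)"
proof (rule bdd_aboveI)
  fix \<mu> assume "\<mu> \<in> cw_set M"
  then obtain u where u: "u \<in> prob_simplex" "\<mu> *\<^sub>R u \<le> M \<mu> *v u"
    by (auto simp: cw_set_def)
  show "\<mu> \<le> max 0 (CARD('n) * K)"
  proof (cases "0 < \<mu>")
    case True
    obtain k where k: "\<forall>j. u$j \<le> u$k" using vec_max_component by blast
    have uk: "0 < u$k" using prob_simplex_max_component_pos[OF u(1) k] .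
    have "\<mu> * u$k \<le> (\<Sum>j\<in>UNIV. M \<mu> $ k $ j * u$j)"
      using u(2) by (simp add: less_eq_vec_def matrix_vector_mult_def)
    also have "\<dots> \<le> (\<Sum>j\<in>(UNIV::'n set). K * u$k)"
    proof (rule sum_mono)
      fix j
      have "0 \<le> u$j" using u(1) by (simp add: prob_simplex_def less_eq_vec_def)
      then have "M \<mu> $ k $ j * u$j \<le> K * u$j"
        using assms[OF True, of k j] by (intro mult_right_mono) auto
      also have "\<dots> \<le> K * u$k"
        using k assms[OF True, of k j] by (intro mult_left_mono) auto
      finally show "M \<mu> $ k $ j * u$j \<le> K * u$k" .
    qed
    finally have "\<mu> * u$k \<le> (CARD('n) * K) * u$k" by simp
    then show ?thesis using uk by simp
  qed simp
qed

lemma cw_set_exceeds: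
  assumes metzler: "\<And>\<mu>. metzler (M \<mu>)"
    and cont: "\<And>i j. continuous_on UNIV (\<lambda>\<mu>. M \<mu> $ i $ j)"
    and u: "u \<in> prob_simplex" "\<rho> *\<^sub>R u \<le> M \<mu>\<^sub>0 *v u" and "\<mu>\<^sub>0 < \<rho>"
  shows "\<exists>\<mu>>\<mu>\<^sub>0. \<mu> \<in> cw_set M"
proof -
  have "\<forall>\<^sub>F \<mu> in at_right \<mu>\<^sub>0. \<mu> * u$i \<le> (M \<mu> *v u)$i" for i
  proof (cases "u$i = 0")
    case True
    then show ?thesis
      using metzler_mult_component_nonneg[OF metzler] u(1) by (simp add: prob_simplex_def)
  next
    case False
    then have ui: "0 < u$i" using u(1) by (auto simp: prob_simplex_def less_eq_vec_def less_le)
    let ?f = "\<lambda>\<mu>. (\<Sum>j\<in>UNIV. M \<mu> $ i $ j * u$j) - \<mu> * u$i"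
    have "continuous_on UNIV ?f" by (intro continuous_intros cont)
    then have "isCont ?f \<mu>\<^sub>0" by (simp add: continuous_on_eq_continuous_at)
    then have lim: "(?f \<longlongrightarrow> ?f \<mu>\<^sub>0) (at_right \<mu>\<^sub>0)"
      by (simp add: isCont_def filterlim_at_split)
    have "(\<rho> - \<mu>\<^sub>0) * u$i \<le> ?f \<mu>\<^sub>0"
      using u(2) by (simp add: less_eq_vec_def matrix_vector_mult_def algebra_simps)
    moreover have "0 < (\<rho> - \<mu>\<^sub>0) * u$i" using \<open>\<mu>\<^sub>0 < \<rho>\<close> ui by simp
    ultimately have "0 < ?f \<mu>\<^sub>0" by linarith
    from order_tendstoD(1)[OF lim this] show ?thesis
      by eventually_elim (simp add: matrix_vector_mult_def)
  qed
  then have "\<forall>\<^sub>F \<mu> in at_right \<mu>\<^sub>0. \<mu>\<^sub>0 < \<mu> \<and> \<mu> *\<^sub>R u \<le> M \<mu> *v u"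
    by (auto simp: less_eq_vec_def eventually_at_right_less intro!: eventually_conj eventually_all_finite)
  then obtain \<mu> where "\<mu>\<^sub>0 < \<mu>" "\<mu> *\<^sub>R u \<le> M \<mu> *v u"
    using eventually_happens[of _ "at_right \<mu>\<^sub>0"] by (auto simp: trivial_limit_at_right_real)
  then show ?thesis using u(1) by (auto simp: cw_set_def)
qed

lemma cw_set_has_greatest:
  fixes M :: "real \<Rightarrow> real^'n^'n"
  assumes cont: "\<And>i j. continuous_on UNIV (\<lambda>\<mu>. M \<mu> $ i $ j)"
    and "bdd_above (cw_set M)" "cw_set M \<noteq> {}"
  shows "\<exists>l\<in>cw_set M. \<forall>\<mu>\<in>cw_set M. \<mu> \<le> l"
proof -
  obtain m b where m: "m \<in> cw_set M" and b: "\<And>\<mu>. \<mu> \<in> cw_set M \<Longrightarrow> \<mu> \<le> b"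
    using assms(2,3) by (auto simp: bdd_above_def)
  define S where "S i = {p :: real \<times> (real^'n). fst p * snd p $ i \<le> (\<Sum>j\<in>UNIV. M (fst p) $ i $ j * snd p $ j)}" for i
  define T where "T = ({m..b} \<times> prob_simplex) \<inter> (\<Inter>i. S i)"
  have mem_T: "(\<mu>, u) \<in> T \<longleftrightarrow> \<mu> \<in> {m..b} \<and> u \<in> prob_simplex \<and> \<mu> *\<^sub>R u \<le> M \<mu> *v u" for \<mu> u
    by (auto simp: T_def S_def less_eq_vec_def matrix_vector_mult_def)
  have "closed (S i)" for i
    unfolding S_def
    by (intro closed_Collect_le continuous_intros continuous_on_compose2[OF cont continuous_on_fst]) auto
  then have "compact T"
    unfolding T_def by (intro compact_Int_closed compact_Times compact_prob_simplex closed_INT) auto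
  then have compact_fst_T: "compact (fst ` T)" by (intro compact_continuous_image continuous_intros)
  have in_T: "\<mu> \<in> fst ` T" if \<mu>: "\<mu> \<in> cw_set M" "m \<le> \<mu>" for \<mu>
  proof -
    obtain u where "u \<in> prob_simplex" "\<mu> *\<^sub>R u \<le> M \<mu> *v u"
      using \<mu>(1) by (auto simp: cw_set_def)
    then have "(\<mu>, u) \<in> T" using \<mu> b by (simp add: mem_T)
    then show ?thesis by force
  qed
  have "m \<in> fst ` T" using in_T[OF m] by simp
  then obtain l where l: "l \<in> fst ` T" "\<forall>t\<in>fst ` T. t \<le> l"
    using compact_attains_sup[OF compact_fst_T] by blast
  have "l \<in> cw_set M" using l(1) by (auto simp: cw_set_def mem_T)
  moreover have "\<mu> \<le> l" if "\<mu> \<in> cw_set M" for \<mu>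
  proof (cases "\<mu> < m")
    case True
    moreover have "m \<le> l" using l(2) \<open>m \<in> fst ` T\<close> by blast
    ultimately show ?thesis by simp
  next
    case False
    then have "\<mu> \<in> fst ` T" using in_T[OF that] by simp
    then show ?thesis using l(2) by blast
  qed
  ultimately show ?thesis by blast
qed

lemma cw_set_greatest_eigenvector:
  assumes metzler: "\<And>\<mu>. metzler (M \<mu>)"
    and cont: "\<And>i j. continuous_on UNIV (\<lambda>\<mu>. M \<mu> $ i $ j)"
    and l: "l \<in> cw_set M" "\<forall>\<mu>\<in>cw_set M. \<mu> \<le> l"
  shows "\<exists>u\<in>prob_simplex. M l *v u = l *\<^sub>R u"
proof -
  obtain v where "v \<in> prob_simplex" "l *\<^sub>R v \<le> M l *v v"
    using l(1) by (auto simp: cw_set_def)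
  then obtain u \<rho> where u: "u \<in> prob_simplex" "l \<le> \<rho>" "M l *v u = \<rho> *\<^sub>R u"
    using metzler_eigenvector_ge[OF metzler] by blast
  have "\<not> l < \<rho>"
  proof
    assume "l < \<rho>"
    then obtain \<mu> where "l < \<mu>" "\<mu> \<in> cw_set M"
      using cw_set_exceeds[OF metzler cont u(1)] u(3) by force
    then show False using l(2) by fastforce
  qed
  then show ?thesis using u by force
qed

lemma cw_set_greatest:
  fixes M :: "real \<Rightarrow> real^'n^'n"
  assumes "antimono M" "\<And>\<mu>. metzler (M \<mu>)" "\<And>i j. continuous_on UNIV (\<lambda>\<mu>. M \<mu> $ i $ j)"
    and "bdd_above (cw_set M)"
  obtains l where "l \<in> cw_set M" "\<forall>\<mu>\<in>cw_set M. \<mu> \<le> l" "\<exists>u\<in>prob_simplex. M l *v u = l *\<^sub>R u"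
  using cw_set_has_greatest[OF assms(3,4) cw_set_nonempty[OF assms(1,2)]]
    cw_set_greatest_eigenvector[OF assms(2,3)] by blast

lemma spec_radius_cw_greatest:
  fixes A :: "real^'n^'n"
  assumes A: "0 \<le> A"
  shows "spec_radius A \<in> cw_set (\<lambda>_. A)" "\<forall>\<mu>\<in>cw_set (\<lambda>_. A). \<mu> \<le> spec_radius A"
proof -
  obtain r where r: "r \<in> cw_set (\<lambda>_. A)" "\<forall>\<mu>\<in>cw_set (\<lambda>_. A). \<mu> \<le> r"
    and "\<exists>x\<in>prob_simplex. A *v x = r *\<^sub>R x"
    by (rule cw_set_greatest[of "\<lambda>_. A"])
      (auto simp: antimono_def nonneg_imp_metzler[OF A] intro: cw_set_bdd_above abs_matrix_entry_le_norm)
  then obtain x where x: "x \<in> prob_simplex" "A *v x = r *\<^sub>R x" by blast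
  define Ac where "Ac = (\<chi> i j. complex_of_real (A$i$j))"
  define E where "E = {cmod \<mu> | \<mu>. \<exists>v::complex^'n. v \<noteq> 0 \<and> Ac *v v = \<mu> *s v}"
  have "0 \<in> cw_set (\<lambda>_. A)"
    using nonneg_matrix_vector_mult_nonneg[OF A prob_simplex_nonneg[OF x(1)]] x(1)
    by (auto simp: cw_set_def)
  then have "0 \<le> r" using r(2) by blast
  have "r \<in> E"
  proof -
    define v where "v = (\<chi> i. complex_of_real (x$i))"
    have "v \<noteq> 0" using prob_simplex_nonzero[OF x(1)] by (auto simp: v_def vec_eq_iff)
    moreover have "Ac *v v = complex_of_real r *s v"
      using x(2) by (simp add: vec_eq_iff Ac_def v_def matrix_vector_mult_def flip: of_real_mult of_real_sum)
    ultimately show ?thesis unfolding E_def using \<open>0 \<le> r\<close> by force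
  qed
  moreover have "e \<le> r" if e: "e \<in> E" for e
  proof -
    obtain \<mu> v where ev: "e = cmod \<mu>" "v \<noteq> 0" "Ac *v v = \<mu> *s v"
      using e unfolding E_def by blast
    define a where "a = (\<chi> j. cmod (v$j))"
    have "cmod \<mu> * a$i \<le> (A *v a)$i" for i
    proof -
      have "cmod \<mu> * a$i = cmod (\<Sum>j\<in>UNIV. complex_of_real (A$i$j) * v$j)"
        using ev(3) by (simp add: a_def norm_mult vec_eq_iff Ac_def matrix_vector_mult_def)
      also have "\<dots> \<le> (\<Sum>j\<in>UNIV. cmod (complex_of_real (A$i$j) * v$j))" by (rule norm_sum)
      also have "\<dots> = (A *v a)$i"
        using A by (simp add: a_def matrix_vector_mult_def norm_mult less_eq_vec_def)
      finally show ?thesis .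
    qed
    moreover have "0 \<le> a" "a \<noteq> 0" using ev(2) by (auto simp: a_def less_eq_vec_def vec_eq_iff)
    ultimately have "e \<in> cw_set (\<lambda>_. A)" using ev(1) by (intro cw_setI) (auto simp: less_eq_vec_def)
    then show ?thesis using r(2) by blast
  qed
  ultimately have "spec_radius A = r"
    unfolding spec_radius_def E_def[symmetric] Ac_def[symmetric] by (intro cSup_eq_maximum)
  then show "spec_radius A \<in> cw_set (\<lambda>_. A)" "\<forall>\<mu>\<in>cw_set (\<lambda>_. A). \<mu> \<le> spec_radius A"
    using r by auto
qed

section \<open>Nonsingular M-matrices and the next-generation matrix\<close>

text \<open>Of the many equivalent characterisations of nonsingular M-matrices, this is the one that
  \<open>s(-V) < 0\<close> yields directly.\<close>
definition nonsingular_M_matrix :: "real^'n^'n \<Rightarrow> bool" where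
  "nonsingular_M_matrix W \<longleftrightarrow>
     metzler (- W) \<and> (\<forall>u. 0 \<le> u \<and> u \<noteq> 0 \<longrightarrow> (\<exists>k. 0 < (W *v u)$k))"

lemma M_matrix_inverse_nonneg:
  assumes W: "nonsingular_M_matrix W" and "0 \<le> W *v z"
  shows "0 \<le> z"
proof (rule ccontr)
  define u where "u = (\<chi> j. max (- z$j) 0)"
  assume "\<not> 0 \<le> z"
  then obtain j where "z$j < 0" by (auto simp: less_eq_vec_def not_le)
  then have "0 \<le> u" "u \<noteq> 0" by (auto simp: u_def less_eq_vec_def vec_eq_iff intro!: exI[of _ j])
  then obtain k where k: "0 < (W *v u)$k" using W by (auto simp: nonsingular_M_matrix_def)
  have Z: "metzler (- W)" using W by (simp add: nonsingular_M_matrix_def)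
  show False
  proof (cases "z$k < 0")
    case True
    have "0 \<le> z + u" "(z + u)$k = 0" using True by (auto simp: u_def less_eq_vec_def)
    from metzler_mult_component_nonneg[OF Z this] have "(W *v (z + u))$k \<le> 0"
      by (simp add: matrix_vector_mult_def sum_negf)
    then show False
      using k assms(2) by (simp add: matrix_vector_right_distrib less_eq_vec_def) (smt (verit))
  next
    case False
    then have "u$k = 0" by (simp add: u_def)
    from metzler_mult_component_nonneg[OF Z \<open>0 \<le> u\<close> this] show False
      using k by (simp add: matrix_vector_mult_def sum_negf)
  qed
qed

lemma M_matrix_inverse:
  assumes "nonsingular_M_matrix W"
  shows "W ** matrix_inv W = mat 1" "matrix_inv W ** W = mat 1"
proof -
  have "inj ((*v) W)"
  proof (rule injI)
    fix x y assume "W *v x = W *v y"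
    then have "0 \<le> W *v (x - y)" "0 \<le> W *v (y - x)"
      by (simp_all add: matrix_vector_mult_diff_distrib)
    then show "x = y"
      using M_matrix_inverse_nonneg[OF assms] by (meson antisym diff_ge_0_iff_ge)
  qed
  then have "\<exists>A'. W ** A' = mat 1 \<and> A' ** W = mat 1"
    by (metis invertible_def invertible_left_inverse matrix_left_invertible_injective)
  then have "W ** matrix_inv W = mat 1 \<and> matrix_inv W ** W = mat 1"
    unfolding matrix_inv_def by (rule someI_ex)
  then show "W ** matrix_inv W = mat 1" "matrix_inv W ** W = mat 1" by auto
qed

lemma M_matrix_mult_inverse [simp]:
  assumes "nonsingular_M_matrix W"
  shows "W *v (matrix_inv W *v x) = x" "matrix_inv W *v (W *v x) = x"
  by (simp_all add: matrix_vector_mul_assoc M_matrix_inverse[OF assms])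

lemma M_matrix_inverse_matrix_nonneg:
  assumes "nonsingular_M_matrix W"
  shows "0 \<le> matrix_inv W"
proof -
  have "0 \<le> matrix_inv W *v axis j 1" for j
    by (rule M_matrix_inverse_nonneg[OF assms]) (simp add: assms less_eq_vec_def axis_def)
  then show ?thesis by (simp add: less_eq_vec_def matrix_vector_mult_basis column_def)
qed

lemma M_matrix_diagonal_pos:
  assumes "nonsingular_M_matrix W"
  shows "0 < W$k$k"
proof -
  have "0 \<le> axis k (1::real)" "axis k (1::real) \<noteq> 0"
    by (auto simp: less_eq_vec_def axis_def vec_eq_iff)
  then obtain i where "0 < (W *v axis k 1)$i"
    using assms unfolding nonsingular_M_matrix_def by blast
  moreover have "i \<noteq> k \<Longrightarrow> W$i$k \<le> 0"
    using assms by (simp add: nonsingular_M_matrix_def metzler_def)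
  ultimately show ?thesis by (cases "i = k") (auto simp: matrix_vector_mult_basis column_def)
qed

lemma M_matrix_mult_le_trace:
  assumes W: "nonsingular_M_matrix W" and "0 \<le> v"
  shows "W *v v \<le> trace W *\<^sub>R v"
proof -
  have "(W *v v)$k \<le> trace W * v$k" for k
  proof -
    have "(W *v v)$k = W$k$k * v$k + (\<Sum>j\<in>UNIV-{k}. W$k$j * v$j)"
      by (simp add: matrix_vector_mult_def sum.remove)
    also have "\<dots> \<le> W$k$k * v$k"
      using W \<open>0 \<le> v\<close>
      by (auto simp: nonsingular_M_matrix_def metzler_def less_eq_vec_def
          intro!: sum_nonpos mult_nonpos_nonneg)
    also have "\<dots> \<le> trace W * v$k"
      using M_matrix_diagonal_pos[OF W] \<open>0 \<le> v\<close> unfolding trace_def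
      by (intro mult_right_mono member_le_sum) (auto simp: less_eq_vec_def less_imp_le)
    finally show ?thesis .
  qed
  then show ?thesis by (simp add: less_eq_vec_def)
qed

lemma M_matrix_trace_pos: "nonsingular_M_matrix W \<Longrightarrow> 0 < trace W"
  unfolding trace_def by (intro sum_pos) (auto simp: M_matrix_diagonal_pos)

lemma M_matrix_shift:
  fixes W :: "real^'n^'n"
  assumes W: "nonsingular_M_matrix W" and "0 \<le> \<mu>"
  shows "nonsingular_M_matrix (W + \<mu> *\<^sub>R mat 1)"
  unfolding nonsingular_M_matrix_def
proof (intro conjI allI impI)
  show "metzler (- (W + \<mu> *\<^sub>R mat 1))"
    using W by (simp add: nonsingular_M_matrix_def metzler_def mat_def)
  fix u :: "real^'n" assume u: "0 \<le> u \<and> u \<noteq> 0"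
  then obtain k where "0 < (W *v u)$k" using W by (auto simp: nonsingular_M_matrix_def)
  moreover have "0 \<le> \<mu> * u$k" using \<open>0 \<le> \<mu>\<close> u by (simp add: less_eq_vec_def)
  ultimately show "\<exists>k. 0 < ((W + \<mu> *\<^sub>R mat 1) *v u)$k"
    by (auto simp: matrix_vector_mult_add_rdistrib scaleR_matrix_vector_assoc[symmetric]
        intro!: exI[of _ k])
qed

lemma cw_next_gen_one_of_zero:
  fixes B W :: "real^'n^'n"
  assumes B: "0 \<le> B" and W: "nonsingular_M_matrix W" and "0 \<in> cw_set (\<lambda>_. B - W)"
  shows "1 \<in> cw_set (\<lambda>_. B ** matrix_inv W)"
proof -
  obtain u where u: "u \<in> prob_simplex" "W *v u \<le> B *v u"
    using assms(3) by (auto simp: cw_set_def matrix_vector_mult_diff_rdistrib)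
  define x where "x = B *v u"
  have "x \<noteq> 0"
  proof
    assume "x = 0"
    moreover obtain k where "0 < (W *v u)$k"
      using W prob_simplex_nonneg[OF u(1)] prob_simplex_nonzero[OF u(1)]
      unfolding nonsingular_M_matrix_def by blast
    ultimately show False using u(2) by (simp add: x_def less_eq_vec_def) (meson not_le)
  qed
  have "u \<le> matrix_inv W *v x"
    using nonneg_matrix_vector_mult_mono[OF M_matrix_inverse_matrix_nonneg[OF W] u(2)] W
    by (simp add: x_def)
  then have "1 *\<^sub>R x \<le> (B ** matrix_inv W) *v x"
    using nonneg_matrix_vector_mult_mono[OF B] by (simp add: x_def matrix_vector_mul_assoc[symmetric])
  moreover have "0 \<le> x"
    using B u(1) by (simp add: x_def prob_simplex_def nonneg_matrix_vector_mult_nonneg)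
  ultimately show ?thesis using \<open>x \<noteq> 0\<close> by (intro cw_setI)
qed

lemma cw_zero_of_next_gen_one:
  fixes B W :: "real^'n^'n"
  assumes W: "nonsingular_M_matrix W" and "1 \<in> cw_set (\<lambda>_. B ** matrix_inv W)"
  shows "0 \<in> cw_set (\<lambda>_. B - W)"
proof -
  obtain x where x: "x \<in> prob_simplex" "x \<le> B *v (matrix_inv W *v x)"
    using assms(2) by (auto simp: cw_set_def matrix_vector_mul_assoc)
  define y where "y = matrix_inv W *v x"
  have "0 \<le> y"
    using M_matrix_inverse_nonneg[OF W] x(1) by (simp add: y_def W prob_simplex_def)
  moreover have "W *v y = x" using W by (simp add: y_def)
  then have "y \<noteq> 0" using prob_simplex_nonzero[OF x(1)] by auto
  moreover have "0 *\<^sub>R y \<le> (B - W) *v y"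
    using x(2) W by (simp add: y_def matrix_vector_mult_diff_rdistrib)
  ultimately show ?thesis by (rule cw_setI)
qed

lemma cw_next_gen_gt_one_of_pos:
  fixes B W :: "real^'n^'n"
  assumes B: "0 \<le> B" and W: "nonsingular_M_matrix W"
    and "0 < \<rho>" "\<rho> \<in> cw_set (\<lambda>_. B - W)"
  shows "\<exists>\<rho>'>1. \<rho>' \<in> cw_set (\<lambda>_. B ** matrix_inv W)"
proof -
  obtain u where u: "u \<in> prob_simplex" "W *v u + \<rho> *\<^sub>R u \<le> B *v u"
    using assms(4) by (auto simp: cw_set_def matrix_vector_mult_diff_rdistrib less_eq_vec_def algebra_simps)
  have u0: "0 \<le> u" using u(1) by (rule prob_simplex_nonneg)
  define x where "x = B *v u"
  define D where "D = trace W"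
  have D: "0 < D" unfolding D_def using W by (rule M_matrix_trace_pos)
  have "x \<noteq> 0"
  proof
    assume "x = 0"
    moreover obtain k where "0 < (W *v u)$k"
      using W u0 prob_simplex_nonzero[OF u(1)] unfolding nonsingular_M_matrix_def by blast
    moreover have "0 \<le> \<rho> * u$k" using \<open>0 < \<rho>\<close> u0 by (simp add: less_eq_vec_def)
    ultimately show False using u(2) by (simp add: x_def less_eq_vec_def) (smt (verit))
  qed
  have Winv: "0 \<le> matrix_inv W" by (rule M_matrix_inverse_matrix_nonneg[OF W])
  \<comment> \<open>\<open>u = W (W\<^sup>-\<^sup>1 u) \<le> D W\<^sup>-\<^sup>1 u\<close> bounds \<open>W\<^sup>-\<^sup>1\<close> from below on nonnegative vectors\<close>
  have "u \<le> D *\<^sub>R (matrix_inv W *v u)"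
    using M_matrix_mult_le_trace[OF W nonneg_matrix_vector_mult_nonneg[OF Winv u0]] W
    by (simp add: D_def)
  then have "(1 + \<rho> / D) *\<^sub>R u \<le> u + \<rho> *\<^sub>R (matrix_inv W *v u)"
    using D \<open>0 < \<rho>\<close> by (auto simp: less_eq_vec_def algebra_simps field_simps mult_left_mono)
  also have "\<dots> \<le> matrix_inv W *v x"
    using nonneg_matrix_vector_mult_mono[OF Winv u(2)] W
    by (simp add: x_def matrix_vector_right_distrib matrix_vector_mult_scaleR)
  finally have "(1 + \<rho> / D) *\<^sub>R x \<le> (B ** matrix_inv W) *v x"
    using nonneg_matrix_vector_mult_mono[OF B, of "(1 + \<rho> / D) *\<^sub>R u"]
    by (simp add: x_def matrix_vector_mul_assoc[symmetric] matrix_vector_mult_scaleR)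
  moreover have "0 \<le> x" using B u0 by (simp add: x_def nonneg_matrix_vector_mult_nonneg)
  ultimately have "1 + \<rho> / D \<in> cw_set (\<lambda>_. B ** matrix_inv W)"
    using \<open>x \<noteq> 0\<close> by (intro cw_setI)
  moreover have "1 < 1 + \<rho> / D" using D \<open>0 < \<rho>\<close> by simp
  ultimately show ?thesis by blast
qed

lemma exists_pos_multiple_le:
  fixes a c :: "real^'n"
  shows "\<exists>\<mu>>0. \<forall>k. 0 < a$k \<longrightarrow> \<mu> * c$k \<le> a$k"
proof -
  have "\<forall>\<^sub>F \<mu> in at_right 0. 0 < a$k \<longrightarrow> \<mu> * c$k \<le> a$k" for k
  proof (cases "0 < a$k")
    case True
    have "((\<lambda>\<mu>. \<mu> * c$k) \<longlongrightarrow> 0) (at_right 0)" by (auto intro!: tendsto_eq_intros)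
    from order_tendstoD(2)[OF this True] show ?thesis
      by (auto elim!: eventually_mono)
  qed simp
  then have "\<forall>\<^sub>F \<mu> in at_right 0. 0 < \<mu> \<and> (\<forall>k. 0 < a$k \<longrightarrow> \<mu> * c$k \<le> a$k)"
    by (intro eventually_conj eventually_all_finite) (auto simp: eventually_at_right_less)
  then show ?thesis
    using eventually_happens[of _ "at_right (0::real)"] by (auto simp: trivial_limit_at_right_real)
qed

lemma cw_pos_of_next_gen_gt_one:
  fixes B W :: "real^'n^'n"
  assumes B: "0 \<le> B" and W: "nonsingular_M_matrix W"
    and "1 < \<rho>" "\<rho> \<in> cw_set (\<lambda>_. B ** matrix_inv W)"
  shows "\<exists>\<mu>>0. \<mu> \<in> cw_set (\<lambda>_. B - W)"
proof -
  obtain x where x: "x \<in> prob_simplex" "\<rho> *\<^sub>R x \<le> B *v (matrix_inv W *v x)"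
    using assms(4) by (auto simp: cw_set_def matrix_vector_mul_assoc)
  have x0: "0 \<le> x" using x(1) by (rule prob_simplex_nonneg)
  define y where "y = matrix_inv W *v x"
  define z where "z = matrix_inv W *v y"
  have Winv: "0 \<le> matrix_inv W" by (rule M_matrix_inverse_matrix_nonneg[OF W])
  obtain \<mu> where \<mu>: "0 < \<mu>" "\<And>k. 0 < x$k \<Longrightarrow> \<mu> * (B *v z)$k \<le> (\<rho> - 1) * x$k"
    using exists_pos_multiple_le[of "(\<rho> - 1) *\<^sub>R x" "B *v z"] \<open>1 < \<rho>\<close> by auto
  define W\<^sub>\<mu> where "W\<^sub>\<mu> = W + \<mu> *\<^sub>R mat 1"
  have W\<mu>: "nonsingular_M_matrix W\<^sub>\<mu>"
    unfolding W\<^sub>\<mu>_def using W \<mu>(1) by (simp add: M_matrix_shift)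
  \<comment> \<open>\<open>y\<^sub>\<mu> = (W + \<mu>)\<^sup>-\<^sup>1 x\<close> satisfies the resolvent estimate \<open>y - \<mu> z \<le> y\<^sub>\<mu> \<le> y\<close>\<close>
  define y\<^sub>\<mu> where "y\<^sub>\<mu> = matrix_inv W\<^sub>\<mu> *v x"
  have y\<mu>0: "0 \<le> y\<^sub>\<mu>"
    using Winv M_matrix_inverse_matrix_nonneg[OF W\<mu>] x0
    by (simp add: y\<^sub>\<mu>_def nonneg_matrix_vector_mult_nonneg)
  have Wy\<mu>: "W *v y\<^sub>\<mu> + \<mu> *\<^sub>R y\<^sub>\<mu> = x"
    using M_matrix_mult_inverse(1)[OF W\<mu>, of x]
    by (simp add: y\<^sub>\<mu>_def W\<^sub>\<mu>_def matrix_vector_mult_add_rdistrib scaleR_matrix_vector_assoc[symmetric])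
  have W_diff: "W *v (y - y\<^sub>\<mu>) = \<mu> *\<^sub>R y\<^sub>\<mu>"
    using Wy\<mu> W by (auto simp: y_def matrix_vector_mult_diff_distrib algebra_simps)
  then have "0 \<le> y - y\<^sub>\<mu>"
    using y\<mu>0 \<mu>(1) M_matrix_inverse_nonneg[OF W, of "y - y\<^sub>\<mu>"] by (simp add: less_eq_vec_def)
  moreover have "W *v (\<mu> *\<^sub>R z - (y - y\<^sub>\<mu>)) = \<mu> *\<^sub>R (y - y\<^sub>\<mu>)"
    using W_diff W by (simp add: z_def matrix_vector_mult_diff_distrib matrix_vector_mult_scaleR algebra_simps)
  ultimately have "0 \<le> \<mu> *\<^sub>R z - (y - y\<^sub>\<mu>)"
    using \<mu>(1) M_matrix_inverse_nonneg[OF W, of "\<mu> *\<^sub>R z - (y - y\<^sub>\<mu>)"]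
    by (simp add: less_eq_vec_def)
  then have "y - \<mu> *\<^sub>R z \<le> y\<^sub>\<mu>" by (auto simp: less_eq_vec_def algebra_simps)
  from nonneg_matrix_vector_mult_mono[OF B this]
  have By\<mu>: "B *v y - \<mu> *\<^sub>R (B *v z) \<le> B *v y\<^sub>\<mu>"
    by (simp add: matrix_vector_mult_diff_distrib matrix_vector_mult_scaleR)
  have "x \<le> B *v y\<^sub>\<mu>"
  proof -
    have "x$k \<le> (B *v y\<^sub>\<mu>)$k" for k
    proof (cases "0 < x$k")
      case True
      then show ?thesis using \<mu>(2)[OF True] By\<mu> x(2)
        by (simp add: y_def less_eq_vec_def algebra_simps) (smt (verit))
    next
      case False
      then show ?thesis
        using x0 nonneg_matrix_vector_mult_nonneg[OF B y\<mu>0] by (simp add: less_eq_vec_def) (smt (verit))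
    qed
    then show ?thesis by (simp add: less_eq_vec_def)
  qed
  then have "\<mu> *\<^sub>R y\<^sub>\<mu> \<le> (B - W) *v y\<^sub>\<mu>"
    using Wy\<mu> by (auto simp: matrix_vector_mult_diff_rdistrib less_eq_vec_def algebra_simps)
  moreover have "y\<^sub>\<mu> \<noteq> 0"
    using Wy\<mu> prob_simplex_nonzero[OF x(1)] by auto
  ultimately show ?thesis using y\<mu>0 \<mu>(1) by (blast intro: cw_setI)
qed

lemma sgn_next_gen_threshold:
  fixes B W :: "real^'n^'n" and M :: "real \<Rightarrow> real^'n^'n"
  assumes B: "0 \<le> B" and W: "nonsingular_M_matrix W"
    and M: "antimono M" "\<And>\<mu>. metzler (M \<mu>)" "\<And>i j. continuous_on UNIV (\<lambda>\<mu>. M \<mu> $ i $ j)"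
      "M 0 = B - W"
    and r: "r \<in> cw_set (\<lambda>_. B ** matrix_inv W)" "\<forall>\<rho>\<in>cw_set (\<lambda>_. B ** matrix_inv W). \<rho> \<le> r"
    and l: "l \<in> cw_set M" "\<forall>\<mu>\<in>cw_set M. \<mu> \<le> l"
  shows "sgn (r - 1) = sgn l"
proof -
  have const_antimono: "antimono (\<lambda>_. A)" for A :: "real^'n^'n" by (simp add: antimono_def)
  have "0 \<le> l \<longleftrightarrow> 1 \<le> r"
  proof
    assume "0 \<le> l"
    then have "0 \<in> cw_set (\<lambda>_. B - W)"
      using cw_set_downward_closed[OF M(1) l(1)] mem_cw_set_iff_const[of 0 M] M(4) by simp
    then show "1 \<le> r" using cw_next_gen_one_of_zero[OF B W] r(2) by blast
  next
    assume "1 \<le> r"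
    then have "0 \<in> cw_set (\<lambda>_. B - W)"
      using cw_zero_of_next_gen_one[OF W] cw_set_downward_closed[OF const_antimono r(1)] by blast
    then show "0 \<le> l" using l(2) mem_cw_set_iff_const[of 0 M] M(4) by simp
  qed
  moreover have "0 < l \<longleftrightarrow> 1 < r"
  proof
    assume "0 < l"
    have "l \<in> cw_set (\<lambda>_. B - W)"
      using cw_set_const_mono[OF antimonoD[OF M(1), of 0 l]] mem_cw_set_iff_const[of l M] l(1) \<open>0 < l\<close> M(4)
      by simp
    then show "1 < r"
      using cw_next_gen_gt_one_of_pos[OF B W \<open>0 < l\<close>] r(2) by fastforce
  next
    assume "1 < r"
    then obtain \<rho> u where "0 < \<rho>" "u \<in> prob_simplex" "\<rho> *\<^sub>R u \<le> M 0 *v u"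
      using cw_pos_of_next_gen_gt_one[OF B W _ r(1)] M(4) by (auto simp: cw_set_def)
    then obtain \<mu> where "0 < \<mu>" "\<mu> \<in> cw_set M"
      using cw_set_exceeds[OF M(2,3)] by blast
    then show "0 < l" using l(2) by fastforce
  qed
  ultimately show ?thesis by (auto simp: sgn_if)
qed

section \<open>Linear operators on the phase space\<close>

lemma in_C_UNIV: "continuous_on UNIV f \<Longrightarrow> in_C \<tau> f"
  unfolding in_C_def by (rule continuous_on_subset) auto

lemma bounded_linear_C_add:
  "bounded_linear_C \<tau> L \<Longrightarrow> in_C \<tau> f \<Longrightarrow> in_C \<tau> g \<Longrightarrow> L (\<lambda>\<theta>. f \<theta> + g \<theta>) = L f + L g"
  unfolding bounded_linear_C_def by blast

lemma bounded_linear_C_scale: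
  "bounded_linear_C \<tau> L \<Longrightarrow> in_C \<tau> f \<Longrightarrow> L (\<lambda>\<theta>. c *\<^sub>R f \<theta>) = c *\<^sub>R L f"
  unfolding bounded_linear_C_def by blast

lemma bounded_linear_C_zero: "bounded_linear_C \<tau> L \<Longrightarrow> L (\<lambda>\<theta>. 0) = 0"
  using bounded_linear_C_scale[of \<tau> L "\<lambda>\<theta>. 0" 0] by (simp add: in_C_def)

lemma bounded_linear_C_diff:
  assumes "bounded_linear_C \<tau> L" "in_C \<tau> f" "in_C \<tau> g"
  shows "L (\<lambda>\<theta>. f \<theta> - g \<theta>) = L f - L g"
proof -
  have "in_C \<tau> (\<lambda>\<theta>. (-1) *\<^sub>R g \<theta>)" using assms(3) by (simp add: in_C_def continuous_intros)
  from bounded_linear_C_add[OF assms(1,2) this] show ?thesis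
    using bounded_linear_C_scale[OF assms(1,3), of "-1"] by simp
qed

lemma bounded_linear_C_sum:
  assumes L: "bounded_linear_C \<tau> L" and "finite S" "\<And>j. j \<in> S \<Longrightarrow> in_C \<tau> (f j)"
  shows "L (\<lambda>\<theta>. \<Sum>j\<in>S. f j \<theta>) = (\<Sum>j\<in>S. L (f j))"
  using assms(2,3)
proof (induction S rule: finite_induct)
  case empty
  then show ?case using bounded_linear_C_zero[OF L] by simp
next
  case (insert x F)
  have "in_C \<tau> (\<lambda>\<theta>. \<Sum>j\<in>F. f j \<theta>)"
    using insert.prems unfolding in_C_def by (intro continuous_on_sum) auto
  then show ?case
    using insert bounded_linear_C_add[OF L, of "f x" "\<lambda>\<theta>. \<Sum>j\<in>F. f j \<theta>"] by simp
qed

lemma bounded_linear_C_norm_le: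
  assumes L: "bounded_linear_C \<tau> L" and "0 \<le> \<tau>"
  obtains K where
    "\<And>\<phi> c. in_C \<tau> \<phi> \<Longrightarrow> (\<And>\<theta>. \<theta> \<in> {-\<tau>..0} \<Longrightarrow> norm (\<phi> \<theta>) \<le> c) \<Longrightarrow> norm (L \<phi>) \<le> K * c"
proof -
  obtain K where K: "\<And>\<phi>. in_C \<tau> \<phi> \<Longrightarrow> norm (L \<phi>) \<le> K * (SUP \<theta>\<in>{-\<tau>..0}. norm (\<phi> \<theta>))"
    using L unfolding bounded_linear_C_def by blast
  have "norm (L \<phi>) \<le> max K 0 * c"
    if \<phi>: "in_C \<tau> \<phi>" and c: "\<And>\<theta>. \<theta> \<in> {-\<tau>..0} \<Longrightarrow> norm (\<phi> \<theta>) \<le> c" for \<phi> c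
  proof -
    let ?S = "SUP \<theta>\<in>{-\<tau>..0}. norm (\<phi> \<theta>)"
    have "?S \<le> c" using c \<open>0 \<le> \<tau>\<close> by (intro cSUP_least) auto
    moreover have "norm (\<phi> 0) \<le> ?S"
      using c \<open>0 \<le> \<tau>\<close> by (intro cSUP_upper bdd_aboveI2) auto
    then have "0 \<le> ?S" by (meson norm_ge_zero order_trans)
    ultimately have "max K 0 * ?S \<le> max K 0 * c" by (intro mult_left_mono) auto
    moreover have "K * ?S \<le> max K 0 * ?S" using \<open>0 \<le> ?S\<close> by (intro mult_right_mono) auto
    ultimately show ?thesis using K[OF \<phi>] by linarith
  qed
  then show ?thesis using that[of "max K 0"] by simp
qed

lemma bounded_linear_C_minus:
  assumes F: "bounded_linear_C \<tau> F" and V: "bounded_linear_C \<tau> V"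
  shows "bounded_linear_C \<tau> (\<lambda>\<phi>. F \<phi> - V \<phi>)"
proof -
  obtain K\<^sub>F K\<^sub>V where
    K\<^sub>F: "\<And>\<phi>. in_C \<tau> \<phi> \<Longrightarrow> norm (F \<phi>) \<le> K\<^sub>F * (SUP \<theta>\<in>{-\<tau>..0}. norm (\<phi> \<theta>))" and
    K\<^sub>V: "\<And>\<phi>. in_C \<tau> \<phi> \<Longrightarrow> norm (V \<phi>) \<le> K\<^sub>V * (SUP \<theta>\<in>{-\<tau>..0}. norm (\<phi> \<theta>))"
    using F V unfolding bounded_linear_C_def by metis
  have bound: "norm (F \<phi> - V \<phi>) \<le> (K\<^sub>F + K\<^sub>V) * (SUP \<theta>\<in>{-\<tau>..0}. norm (\<phi> \<theta>))"
    if "in_C \<tau> \<phi>" for \<phi>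
  proof -
    have "norm (F \<phi> - V \<phi>) \<le> norm (F \<phi>) + norm (V \<phi>)" by (rule norm_triangle_ineq4)
    also have "\<dots> \<le> (K\<^sub>F + K\<^sub>V) * (SUP \<theta>\<in>{-\<tau>..0}. norm (\<phi> \<theta>))"
      using K\<^sub>F[OF that] K\<^sub>V[OF that] by (simp add: distrib_right)
    finally show ?thesis .
  qed
  show ?thesis
    using F V bound unfolding bounded_linear_C_def
    by (auto simp: algebra_simps scaleR_diff_right intro!: exI[of _ "K\<^sub>F + K\<^sub>V"])
qed

lemma bounded_linear_C_uminus:
  "bounded_linear_C \<tau> V \<Longrightarrow> bounded_linear_C \<tau> (\<lambda>\<phi>. - V \<phi>)"
  unfolding bounded_linear_C_def by auto

definition quasimonotone :: "real \<Rightarrow> ((real \<Rightarrow> real^'m) \<Rightarrow> real^'m) \<Rightarrow> bool" where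
  "quasimonotone \<tau> L \<longleftrightarrow> (\<forall>i \<phi>. in_Cplus \<tau> \<phi> \<and> \<phi> 0 $ i = 0 \<longrightarrow> 0 \<le> L \<phi> $ i)"

lemma quasimonotone_diff:
  fixes F V :: "(real \<Rightarrow> real^'m) \<Rightarrow> real^'m"
  assumes "\<And>\<phi> i. in_Cplus \<tau> \<phi> \<Longrightarrow> 0 \<le> F \<phi> $ i" and "quasimonotone \<tau> (\<lambda>\<phi>. - V \<phi>)"
  shows "quasimonotone \<tau> (\<lambda>\<phi>. F \<phi> - V \<phi>)"
  unfolding quasimonotone_def
proof (intro allI impI)
  fix i and \<phi> :: "real \<Rightarrow> real^'m" assume "in_Cplus \<tau> \<phi> \<and> \<phi> 0 $ i = 0"
  then have "0 \<le> F \<phi> $ i" "0 \<le> (- V \<phi>) $ i"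
    using assms unfolding quasimonotone_def by blast+
  then show "0 \<le> (F \<phi> - V \<phi>) $ i" by simp
qed

text \<open>The real number \<open>\<mu>\<close> is an eigenvalue of \<open>du/dt = L(u\<^sub>t)\<close> iff
  \<open>char_matrix L \<mu> *v u = \<mu> *\<^sub>R u\<close> has a solution \<open>u \<noteq> 0\<close>.\<close>
definition char_matrix :: "((real \<Rightarrow> real^'m) \<Rightarrow> real^'m) \<Rightarrow> real \<Rightarrow> real^'m^'m" where
  "char_matrix L \<mu> = (\<chi> i j. L (\<lambda>\<theta>. exp (\<mu> * \<theta>) *\<^sub>R axis j 1) $ i)"

lemma in_C_exp_scaleR: "in_C \<tau> (\<lambda>\<theta>. exp (\<mu> * \<theta>) *\<^sub>R u)"
  by (intro in_C_UNIV continuous_intros)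

lemma char_matrix_uminus: "char_matrix (\<lambda>\<phi>. - L \<phi>) \<mu> = - char_matrix L \<mu>"
  by (simp add: char_matrix_def vec_eq_iff)

lemma hatmat_eq_char_matrix: "hatmat L = char_matrix L 0"
  by (simp add: hatmat_def matrix_def char_matrix_def)

lemma char_matrix_mult:
  fixes L :: "(real \<Rightarrow> real^'m) \<Rightarrow> real^'m"
  assumes L: "bounded_linear_C \<tau> L"
  shows "L (\<lambda>\<theta>. exp (\<mu> * \<theta>) *\<^sub>R u) = char_matrix L \<mu> *v u"
proof -
  have "(\<lambda>\<theta>. exp (\<mu> * \<theta>) *\<^sub>R u) = (\<lambda>\<theta>. \<Sum>j\<in>UNIV. u$j *\<^sub>R (exp (\<mu> * \<theta>) *\<^sub>R axis j 1))"
  proof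
    fix \<theta>
    have "(\<Sum>j\<in>UNIV. u$j *\<^sub>R (exp (\<mu> * \<theta>) *\<^sub>R axis j (1::real)))
        = exp (\<mu> * \<theta>) *\<^sub>R (\<Sum>j\<in>UNIV. u$j *\<^sub>R axis j 1)"
      by (simp add: scaleR_sum_right mult.commute)
    then show "exp (\<mu> * \<theta>) *\<^sub>R u = (\<Sum>j\<in>UNIV. u$j *\<^sub>R (exp (\<mu> * \<theta>) *\<^sub>R axis j 1))"
      using basis_expansion[of u] by (simp add: scalar_mult_eq_scaleR)
  qed
  then have "L (\<lambda>\<theta>. exp (\<mu> * \<theta>) *\<^sub>R u) = (\<Sum>j\<in>UNIV. L (\<lambda>\<theta>. u$j *\<^sub>R (exp (\<mu> * \<theta>) *\<^sub>R axis j 1)))"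
    by (simp only:) (rule bounded_linear_C_sum[OF L], auto simp: in_C_def intro!: continuous_intros)
  also have "\<dots> = (\<Sum>j\<in>UNIV. u$j *\<^sub>R L (\<lambda>\<theta>. exp (\<mu> * \<theta>) *\<^sub>R axis j 1))"
    using bounded_linear_C_scale[OF L in_C_exp_scaleR] by simp
  also have "\<dots> = char_matrix L \<mu> *v u"
    by (simp add: vec_eq_iff char_matrix_def matrix_vector_mult_def mult.commute)
  finally show ?thesis .
qed

lemma char_matrix_metzler:
  fixes L :: "(real \<Rightarrow> real^'m) \<Rightarrow> real^'m"
  assumes "quasimonotone \<tau> L"
  shows "metzler (char_matrix L \<mu>)"
  unfolding metzler_def
proof (intro allI impI)
  fix i j :: 'm assume "i \<noteq> j"
  moreover have "in_Cplus \<tau> (\<lambda>\<theta>. exp (\<mu> * \<theta>) *\<^sub>R axis j (1::real))"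
    using in_C_exp_scaleR by (auto simp: in_Cplus_def axis_def)
  ultimately show "0 \<le> char_matrix L \<mu> $ i $ j"
    using assms by (simp add: quasimonotone_def char_matrix_def axis_def)
qed

lemma char_matrix_antimono:
  fixes L :: "(real \<Rightarrow> real^'m) \<Rightarrow> real^'m"
  assumes L: "bounded_linear_C \<tau> L" and Q: "quasimonotone \<tau> L"
  shows "antimono (char_matrix L)"
proof (rule antimonoI)
  fix \<mu> \<mu>' :: real assume "\<mu> \<le> \<mu>'"
  have "char_matrix L \<mu>' $ i $ j \<le> char_matrix L \<mu> $ i $ j" for i j
  proof -
    define \<phi> where "\<phi> \<theta> = exp (\<mu> * \<theta>) *\<^sub>R axis j (1::real) - exp (\<mu>' * \<theta>) *\<^sub>R axis j 1" for \<theta>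
    have "exp (\<mu>' * \<theta>) \<le> exp (\<mu> * \<theta>)" if "\<theta> \<le> 0" for \<theta>
      using \<open>\<mu> \<le> \<mu>'\<close> that by (simp add: mult_right_mono_neg)
    then have "in_Cplus \<tau> \<phi>"
      by (auto simp: in_Cplus_def \<phi>_def axis_def in_C_def continuous_intros)
    moreover have "\<phi> 0 $ i = 0" by (simp add: \<phi>_def)
    ultimately have "0 \<le> L \<phi> $ i" using Q by (simp add: quasimonotone_def)
    then show ?thesis
      using bounded_linear_C_diff[OF L in_C_exp_scaleR in_C_exp_scaleR]
      by (simp add: \<phi>_def[abs_def] char_matrix_def)
  qed
  then show "char_matrix L \<mu>' \<le> char_matrix L \<mu>" by (simp add: less_eq_vec_def)
qed

lemma abs_exp_diff_le:
  fixes a b :: real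
  shows "\<bar>exp a - exp b\<bar> \<le> \<bar>a - b\<bar> * exp (\<bar>a\<bar> + \<bar>b\<bar>)"
proof -
  have *: "exp b - exp a \<le> (b - a) * exp (\<bar>a\<bar> + \<bar>b\<bar>)" if "a \<le> b" for a b :: real
  proof -
    have "(1 + (a - b)) * exp b \<le> exp (a - b) * exp b"
      by (intro mult_right_mono exp_ge_add_one_self) auto
    then have "exp b - exp a \<le> (b - a) * exp b" by (simp add: exp_diff algebra_simps)
    also have "\<dots> \<le> (b - a) * exp (\<bar>a\<bar> + \<bar>b\<bar>)" using that by (intro mult_left_mono) auto
    finally show ?thesis .
  qed
  show ?thesis
    using *[of a b] *[of b a] by (cases "a \<le> b") (auto simp: abs_if add.commute)
qed

lemma continuous_char_matrix:
  fixes L :: "(real \<Rightarrow> real^'m) \<Rightarrow> real^'m"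
  assumes L: "bounded_linear_C \<tau> L" and "0 \<le> \<tau>"
  shows "continuous_on UNIV (\<lambda>\<mu>. char_matrix L \<mu> $ i $ j)"
proof -
  obtain K where K: "\<And>\<phi> c. in_C \<tau> \<phi> \<Longrightarrow> (\<And>\<theta>. \<theta> \<in> {-\<tau>..0} \<Longrightarrow> norm (\<phi> \<theta>) \<le> c) \<Longrightarrow> norm (L \<phi>) \<le> K * c"
    using bounded_linear_C_norm_le[OF assms] by blast
  have "isCont (\<lambda>\<mu>. char_matrix L \<mu> $ i $ j) \<mu>\<^sub>0" for \<mu>\<^sub>0
  proof -
    define g where "g \<mu> = K * (\<bar>\<mu> - \<mu>\<^sub>0\<bar> * \<tau> * exp ((\<bar>\<mu>\<bar> + \<bar>\<mu>\<^sub>0\<bar>) * \<tau>))" for \<mu>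
    have diff_le: "norm (char_matrix L \<mu> $ i $ j - char_matrix L \<mu>\<^sub>0 $ i $ j) \<le> g \<mu>" for \<mu>
    proof -
      define \<phi> where "\<phi> \<theta> = exp (\<mu> * \<theta>) *\<^sub>R axis j (1::real) - exp (\<mu>\<^sub>0 * \<theta>) *\<^sub>R axis j 1" for \<theta>
      have \<phi>_le: "norm (\<phi> \<theta>) \<le> \<bar>\<mu> - \<mu>\<^sub>0\<bar> * \<tau> * exp ((\<bar>\<mu>\<bar> + \<bar>\<mu>\<^sub>0\<bar>) * \<tau>)" if "\<theta> \<in> {-\<tau>..0}" for \<theta>
      proof -
        have \<theta>: "\<bar>\<theta>\<bar> \<le> \<tau>" using that by auto
        have "norm (\<phi> \<theta>) = \<bar>exp (\<mu> * \<theta>) - exp (\<mu>\<^sub>0 * \<theta>)\<bar>"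
          by (simp add: \<phi>_def scaleR_left_diff_distrib[symmetric])
        also have "\<dots> \<le> \<bar>\<mu> - \<mu>\<^sub>0\<bar> * \<bar>\<theta>\<bar> * exp ((\<bar>\<mu>\<bar> + \<bar>\<mu>\<^sub>0\<bar>) * \<bar>\<theta>\<bar>)"
          using abs_exp_diff_le[of "\<mu> * \<theta>" "\<mu>\<^sub>0 * \<theta>"]
          by (simp add: abs_mult left_diff_distrib[symmetric] distrib_right)
        also have "\<dots> \<le> \<bar>\<mu> - \<mu>\<^sub>0\<bar> * \<tau> * exp ((\<bar>\<mu>\<bar> + \<bar>\<mu>\<^sub>0\<bar>) * \<tau>)"
          using \<theta> by (intro mult_mono) (auto intro: mult_left_mono)
        finally show ?thesis .
      qed
      have "norm (L \<phi>) \<le> g \<mu>"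
        using K[of \<phi>, OF _ \<phi>_le] unfolding g_def by (simp add: \<phi>_def in_C_def continuous_intros)
      moreover have "L \<phi> $ i = char_matrix L \<mu> $ i $ j - char_matrix L \<mu>\<^sub>0 $ i $ j"
        using bounded_linear_C_diff[OF L in_C_exp_scaleR in_C_exp_scaleR]
        by (simp add: \<phi>_def[abs_def] char_matrix_def)
      ultimately show ?thesis
        using Finite_Cartesian_Product.norm_nth_le[of "L \<phi>" i] by simp
    qed
    have "(g \<longlongrightarrow> g \<mu>\<^sub>0) (at \<mu>\<^sub>0)" unfolding g_def by (intro tendsto_intros)
    then have "(g \<longlongrightarrow> 0) (at \<mu>\<^sub>0)" by (simp add: g_def)
    from Lim_null_comparison[OF always_eventually[OF allI[OF diff_le]] this]
    have "((\<lambda>\<mu>. char_matrix L \<mu> $ i $ j - char_matrix L \<mu>\<^sub>0 $ i $ j) \<longlongrightarrow> 0) (at \<mu>\<^sub>0)" .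
    then show ?thesis by (simp add: isCont_def LIM_zero_iff)
  qed
  then show ?thesis by (simp add: continuous_at_imp_continuous_on)
qed

lemma char_matrix_cw_set_bdd_above:
  fixes L :: "(real \<Rightarrow> real^'m) \<Rightarrow> real^'m"
  assumes L: "bounded_linear_C \<tau> L" and "0 \<le> \<tau>"
  shows "bdd_above (cw_set (char_matrix L))"
proof -
  obtain K where K: "\<And>\<phi> c. in_C \<tau> \<phi> \<Longrightarrow> (\<And>\<theta>. \<theta> \<in> {-\<tau>..0} \<Longrightarrow> norm (\<phi> \<theta>) \<le> c) \<Longrightarrow> norm (L \<phi>) \<le> K * c"
    using bounded_linear_C_norm_le[OF assms] by blast
  have "\<bar>char_matrix L \<mu> $ i $ j\<bar> \<le> K" if "0 < \<mu>" for \<mu> i j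
  proof -
    have "norm (L (\<lambda>\<theta>. exp (\<mu> * \<theta>) *\<^sub>R axis j 1)) \<le> K * 1"
      by (rule K[OF in_C_exp_scaleR]) (use \<open>0 < \<mu>\<close> in \<open>simp add: mult_nonneg_nonpos\<close>)
    then show ?thesis
      using Finite_Cartesian_Product.norm_nth_le[of "L (\<lambda>\<theta>. exp (\<mu> * \<theta>) *\<^sub>R axis j 1)" i]
      by (simp add: char_matrix_def)
  qed
  then show ?thesis by (rule cw_set_bdd_above)
qed

section \<open>The stability modulus\<close>

lemma has_vector_derivative_exp_scale:
  "((\<lambda>s. exp (z * of_real s) *s (v::complex^'m)) has_vector_derivative (z * exp (z * of_real t)) *s v) (at t)"
proof -
  have "bounded_linear (\<lambda>c::complex. c *s v)"
    by (rule linear_conv_bounded_linear[THEN iffD1], rule linearI)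
      (simp_all add: vec_eq_iff algebra_simps mult_scaleR_left)
  moreover have "((\<lambda>s. exp (z * of_real s)) has_vector_derivative exp (z * of_real t) * z) (at t)"
    by (rule has_vector_derivative_real_field) (auto intro!: derivative_eq_intros)
  ultimately show ?thesis
    using bounded_linear.has_vector_derivative by (fastforce simp: mult.commute)
qed

lemma fde_eigenvalue_of_real:
  fixes L :: "(real \<Rightarrow> real^'m) \<Rightarrow> real^'m"
  assumes L: "bounded_linear_C \<tau> L" and "u \<noteq> 0" and eig: "char_matrix L \<mu> *v u = \<mu> *\<^sub>R u"
  shows "fde_eigenvalue L (complex_of_real \<mu>)"
  unfolding fde_eigenvalue_def
proof (intro exI conjI allI)
  define v where "v = (\<chi> j. complex_of_real (u$j))"
  show "v \<noteq> 0" using \<open>u \<noteq> 0\<close> by (auto simp: v_def vec_eq_iff)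
  fix t :: real
  have exp_real: "exp (complex_of_real \<mu> * of_real (t + \<theta>)) = complex_of_real (exp (\<mu> * \<theta>) * exp (\<mu> * t))"
    for \<theta> by (simp add: algebra_simps flip: exp_of_real exp_add)
  have "(\<lambda>\<theta>. \<chi> j. Re ((exp (complex_of_real \<mu> * of_real (t + \<theta>)) *s v) $ j))
      = (\<lambda>\<theta>. exp (\<mu> * \<theta>) *\<^sub>R (exp (\<mu> * t) *\<^sub>R u))"
    unfolding exp_real by (simp add: fun_eq_iff vec_eq_iff v_def)
  moreover have "L (\<lambda>\<theta>. exp (\<mu> * \<theta>) *\<^sub>R (exp (\<mu> * t) *\<^sub>R u)) = (exp (\<mu> * t) * \<mu>) *\<^sub>R u"
    using char_matrix_mult[OF L, of \<mu> "exp (\<mu> * t) *\<^sub>R u"] eig by (simp add: matrix_vector_mult_scaleR)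
  moreover have "(\<lambda>\<theta>. \<chi> j. Im ((exp (complex_of_real \<mu> * of_real (t + \<theta>)) *s v) $ j)) = (\<lambda>\<theta>. 0)"
    unfolding exp_real by (simp add: fun_eq_iff vec_eq_iff v_def)
  moreover have "exp (complex_of_real \<mu> * of_real t) = complex_of_real (exp (\<mu> * t))"
    by (simp flip: exp_of_real)
  ultimately have "cplx_app L (\<lambda>\<theta>. exp (complex_of_real \<mu> * of_real (t + \<theta>)) *s v)
      = (complex_of_real \<mu> * exp (complex_of_real \<mu> * of_real t)) *s v"
    unfolding cplx_app_def by (simp add: bounded_linear_C_zero[OF L] vec_eq_iff v_def complex_eq_iff)
  then show "((\<lambda>s. exp (complex_of_real \<mu> * of_real s) *s v) has_vector_derivative
      cplx_app L (\<lambda>\<theta>. exp (complex_of_real \<mu> * of_real (t + \<theta>)) *s v)) (at t)"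
    using has_vector_derivative_exp_scale by metis
qed

lemma fde_eigenvalue_char_eq:
  assumes "fde_eigenvalue L z"
  shows "\<exists>v. v \<noteq> 0 \<and> cplx_app L (\<lambda>\<theta>. exp (z * of_real \<theta>) *s v) = z *s v"
proof -
  obtain v where "v \<noteq> 0" and "((\<lambda>s. exp (z * of_real s) *s v) has_vector_derivative
      cplx_app L (\<lambda>\<theta>. exp (z * of_real (0 + \<theta>)) *s v)) (at 0)"
    using assms unfolding fde_eigenvalue_def by blast
  with vector_derivative_unique_at[OF has_vector_derivative_exp_scale[of z v 0]] show ?thesis
    by auto
qed

lemma cplx_app_Re_mult:
  fixes L :: "(real \<Rightarrow> real^'m) \<Rightarrow> real^'m" and \<psi> :: "real \<Rightarrow> complex^'m"
  assumes L: "bounded_linear_C \<tau> L" and \<psi>: "continuous_on {-\<tau>..0} \<psi>"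
  shows "Re (c * cplx_app L \<psi> $ k) = L (\<lambda>\<theta>. \<chi> j. Re (c * \<psi> \<theta> $ j)) $ k"
proof -
  define R where "R = (\<lambda>\<theta>. \<chi> j. Re (\<psi> \<theta> $ j))"
  define I where "I = (\<lambda>\<theta>. \<chi> j. Im (\<psi> \<theta> $ j))"
  have "in_C \<tau> (\<lambda>\<theta>. Re c *\<^sub>R R \<theta>)" "in_C \<tau> (\<lambda>\<theta>. Im c *\<^sub>R I \<theta>)"
    unfolding in_C_def R_def I_def using \<psi> by (auto intro!: continuous_intros)
  then have "L (\<lambda>\<theta>. Re c *\<^sub>R R \<theta> - Im c *\<^sub>R I \<theta>) = Re c *\<^sub>R L R - Im c *\<^sub>R L I"
    using \<psi> by (simp add: bounded_linear_C_diff[OF L] bounded_linear_C_scale[OF L]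
        in_C_def R_def I_def continuous_intros)
  moreover have "(\<lambda>\<theta>. \<chi> j. Re (c * \<psi> \<theta> $ j)) = (\<lambda>\<theta>. Re c *\<^sub>R R \<theta> - Im c *\<^sub>R I \<theta>)"
    by (simp add: R_def I_def fun_eq_iff vec_eq_iff)
  moreover have "cplx_app L \<psi> $ k = Complex (L R $ k) (L I $ k)"
    by (simp add: cplx_app_def R_def I_def)
  ultimately show ?thesis by simp
qed

lemma exists_unit_rotation: "\<exists>c. cmod c = 1 \<and> c * w = complex_of_real (cmod w)"
proof (intro exI conjI)
  have "cis (- Arg w) * rcis (cmod w) (Arg w) = complex_of_real (cmod w)"
    by (simp add: rcis_def cis_mult mult.left_commute[of "cis (- Arg w)"])
  then show "cis (- Arg w) * w = complex_of_real (cmod w)" by (simp add: rcis_cmod_Arg)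
qed simp

text \<open>A Kato-type inequality; it makes the modulus of an eigenfunction a subsolution.\<close>
lemma quasimonotone_Re_mult_le:
  fixes L :: "(real \<Rightarrow> real^'m) \<Rightarrow> real^'m" and \<psi> :: "real \<Rightarrow> complex^'m"
  assumes L: "bounded_linear_C \<tau> L" and Q: "quasimonotone \<tau> L"
    and \<psi>: "continuous_on {-\<tau>..0} \<psi>" and c: "cmod c = 1" "Re (c * \<psi> 0 $ k) = cmod (\<psi> 0 $ k)"
  shows "Re (c * cplx_app L \<psi> $ k) \<le> L (\<lambda>\<theta>. \<chi> j. cmod (\<psi> \<theta> $ j)) $ k"
proof -
  define A where "A \<theta> = (\<chi> j. cmod (\<psi> \<theta> $ j))" for \<theta>
  define R where "R \<theta> = (\<chi> j. Re (c * \<psi> \<theta> $ j))" for \<theta>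
  have "in_C \<tau> A" "in_C \<tau> R"
    unfolding in_C_def A_def R_def using \<psi> by (auto intro!: continuous_intros)
  have "Re (c * \<psi> \<theta> $ j) \<le> cmod (\<psi> \<theta> $ j)" for \<theta> j
    using complex_Re_le_cmod[of "c * \<psi> \<theta> $ j"] c(1) by (simp add: norm_mult)
  then have "in_Cplus \<tau> (\<lambda>\<theta>. A \<theta> - R \<theta>)"
    using \<open>in_C \<tau> A\<close> \<open>in_C \<tau> R\<close> by (simp add: in_Cplus_def in_C_def continuous_intros A_def R_def)
  moreover have "(A 0 - R 0) $ k = 0" using c(2) by (simp add: A_def R_def)
  ultimately have "0 \<le> L (\<lambda>\<theta>. A \<theta> - R \<theta>) $ k" using Q by (simp add: quasimonotone_def)
  then show ?thesis
    using bounded_linear_C_diff[OF L \<open>in_C \<tau> A\<close> \<open>in_C \<tau> R\<close>] cplx_app_Re_mult[OF L \<psi>]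
    by (simp add: A_def[abs_def] R_def[abs_def])
qed

lemma fde_eigenvalue_Re_in_cw_set:
  fixes L :: "(real \<Rightarrow> real^'m) \<Rightarrow> real^'m"
  assumes L: "bounded_linear_C \<tau> L" and Q: "quasimonotone \<tau> L" and "fde_eigenvalue L z"
  shows "Re z \<in> cw_set (char_matrix L)"
proof -
  obtain v where "v \<noteq> 0" and v: "cplx_app L (\<lambda>\<theta>. exp (z * of_real \<theta>) *s v) = z *s v"
    using fde_eigenvalue_char_eq[OF assms(3)] by blast
  define \<psi> where "\<psi> \<theta> = exp (z * of_real \<theta>) *s v" for \<theta>
  define a where "a = (\<chi> j. cmod (v$j))"
  have \<psi>: "continuous_on {-\<tau>..0} \<psi>"
    unfolding \<psi>_def vector_scalar_mult_def by (intro continuous_intros)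
  have abs_\<psi>: "(\<lambda>\<theta>. \<chi> j. cmod (\<psi> \<theta> $ j)) = (\<lambda>\<theta>. exp (Re z * \<theta>) *\<^sub>R a)"
    by (auto simp: \<psi>_def a_def vec_eq_iff norm_mult)
  have "Re z * a$k \<le> (char_matrix L (Re z) *v a)$k" for k
  proof -
    obtain c where c: "cmod c = 1" "c * v$k = complex_of_real (cmod (v$k))"
      using exists_unit_rotation by blast
    have "Re z * a$k = Re (c * cplx_app L \<psi> $ k)"
      using v c(2) by (simp add: \<psi>_def[abs_def] a_def mult.left_commute[of c])
    also have "\<dots> \<le> L (\<lambda>\<theta>. \<chi> j. cmod (\<psi> \<theta> $ j)) $ k"
      by (rule quasimonotone_Re_mult_le[OF L Q \<psi> c(1)]) (simp add: \<psi>_def c(2))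
    also have "\<dots> = (char_matrix L (Re z) *v a)$k"
      unfolding abs_\<psi> char_matrix_mult[OF L] ..
    finally show ?thesis .
  qed
  moreover have "0 \<le> a" "a \<noteq> 0" using \<open>v \<noteq> 0\<close> by (auto simp: a_def less_eq_vec_def vec_eq_iff)
  ultimately show ?thesis by (intro cw_setI) (auto simp: less_eq_vec_def)
qed

lemma stab_mod_cw_greatest:
  fixes L :: "(real \<Rightarrow> real^'m) \<Rightarrow> real^'m"
  assumes L: "bounded_linear_C \<tau> L" and Q: "quasimonotone \<tau> L" and "0 \<le> \<tau>"
  shows "stab_mod L \<in> cw_set (char_matrix L)" "\<forall>\<mu>\<in>cw_set (char_matrix L). \<mu> \<le> stab_mod L"
proof -
  obtain l where l: "l \<in> cw_set (char_matrix L)" "\<forall>\<mu>\<in>cw_set (char_matrix L). \<mu> \<le> l"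
    and "\<exists>u\<in>prob_simplex. char_matrix L l *v u = l *\<^sub>R u"
    by (rule cw_set_greatest[OF char_matrix_antimono[OF L Q] char_matrix_metzler[OF Q]
          continuous_char_matrix[OF L \<open>0 \<le> \<tau>\<close>] char_matrix_cw_set_bdd_above[OF L \<open>0 \<le> \<tau>\<close>]])
  then have "fde_eigenvalue L (complex_of_real l)"
    using fde_eigenvalue_of_real[OF L] prob_simplex_nonzero by blast
  then have "Sup (Re ` {z. fde_eigenvalue L z}) = l"
    using fde_eigenvalue_Re_in_cw_set[OF L Q] l(2)
    by (intro cSup_eq_maximum) (auto intro: rev_image_eqI[of "complex_of_real l"])
  then show "stab_mod L \<in> cw_set (char_matrix L)" "\<forall>\<mu>\<in>cw_set (char_matrix L). \<mu> \<le> stab_mod L"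
    using l by (simp_all add: stab_mod_def)
qed

lemma M_matrix_of_stab_mod_neg:
  fixes L :: "(real \<Rightarrow> real^'m) \<Rightarrow> real^'m"
  assumes L: "bounded_linear_C \<tau> L" and Q: "quasimonotone \<tau> L" and "0 \<le> \<tau>" and "stab_mod L < 0"
  shows "nonsingular_M_matrix (- char_matrix L 0)"
  unfolding nonsingular_M_matrix_def
proof (intro conjI allI impI)
  show "metzler (- (- char_matrix L 0))" using char_matrix_metzler[OF Q] by simp
  fix u :: "real^'m" assume u: "0 \<le> u \<and> u \<noteq> 0"
  show "\<exists>k. 0 < (- char_matrix L 0 *v u)$k"
  proof (rule ccontr)
    assume "\<not> ?thesis"
    then have "0 *\<^sub>R u \<le> char_matrix L 0 *v u"
      by (simp add: less_eq_vec_def matrix_vector_mult_def sum_negf not_less)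
    then have "0 \<in> cw_set (char_matrix L)" using u by (auto intro: cw_setI)
    then show False using stab_mod_cw_greatest(2)[OF assms(1-3)] \<open>stab_mod L < 0\<close> by fastforce
  qed
qed

theorem theorem2p2:
  fixes \<tau> :: real
    and F V :: "(real \<Rightarrow> real^'m) \<Rightarrow> real^'m"
  assumes tau: "\<tau> \<ge> 0"
    and F_bl: "bounded_linear_C \<tau> F"
    and V_bl: "bounded_linear_C \<tau> V"
    and A1: "\<forall>\<phi>. in_Cplus \<tau> \<phi> \<longrightarrow> (\<forall>i. 0 \<le> F \<phi> $ i)"
    and A2_qm: "\<forall>i \<phi>. in_Cplus \<tau> \<phi> \<and> \<phi> 0 $ i = 0 \<longrightarrow> 0 \<le> - (V \<phi> $ i)"
    and A2_s: "stab_mod (\<lambda>\<phi>. - V \<phi>) < 0"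
  shows "sgn (spec_radius (hatmat F ** matrix_inv (hatmat V)) - 1)
           = sgn (stab_mod (\<lambda>\<phi>. F \<phi> - V \<phi>))"
proof -
  let ?L = "\<lambda>\<phi>. F \<phi> - V \<phi>"
  have L: "bounded_linear_C \<tau> ?L" using F_bl V_bl by (rule bounded_linear_C_minus)
  have QN: "quasimonotone \<tau> (\<lambda>\<phi>. - V \<phi>)" using A2_qm by (simp add: quasimonotone_def)
  then have Q: "quasimonotone \<tau> ?L" using A1 by (intro quasimonotone_diff) auto
  from M_matrix_of_stab_mod_neg[OF bounded_linear_C_uminus[OF V_bl] QN tau A2_s]
  have W: "nonsingular_M_matrix (hatmat V)"
    by (simp add: hatmat_eq_char_matrix char_matrix_uminus)
  have "in_Cplus \<tau> (\<lambda>\<theta>. axis j 1)" for j :: 'm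
    by (simp add: in_Cplus_def in_C_def axis_def)
  then have B: "0 \<le> hatmat F"
    using A1 by (simp add: hatmat_eq_char_matrix char_matrix_def less_eq_vec_def)
  have "char_matrix ?L 0 = hatmat F - hatmat V"
    by (simp add: hatmat_eq_char_matrix char_matrix_def vec_eq_iff)
  from sgn_next_gen_threshold[OF B W char_matrix_antimono[OF L Q] char_matrix_metzler[OF Q]
      continuous_char_matrix[OF L tau] this
      spec_radius_cw_greatest[OF nonneg_matrix_mult_nonneg[OF B M_matrix_inverse_matrix_nonneg[OF W]]]
      stab_mod_cw_greatest[OF L Q tau]]
  show ?thesis .
qed

end
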